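(* Let $(X,\rho,\mu)$ be a space of homogeneous type with infinitely many points. Then precisely one of the following holds: (1) $\mu(X)<\infty$; (2) $X$ is countably infinite and there is $\delta>0$ with $\mu(\{x\})\ge\delta$ for all $x\in X$; (3) the measures $\mu(B)$ of balls $B\subseteq X$ take arbitrarily small and arbitrarily large values (i.e. $\inf_B\mu(B)=0$ and $\sup_B\mu(B)=\infty$).
   Context: A space of homogeneous type $(X,\rho,\mu)$: $\rho$ is a quasi-metric on $X$, i.e. it satisfies the axioms of a metric except that the triangle inequality is replaced by $\rho(x,y)\le A_0(\rho(x,z)+\rho(z,y))$ for some constant $A_0\ge 1$; balls are $B(x,r)=\{y\in X:\rho(x,y)<r\}$; $\mu$ is a positive Borel measure defined on a $\sigma$-algebra containing the balls, with the doubling property: there is $C\ge1$ such that $0<\mu(B(x,2r))\le C\mu(B(x,r))<\infty$ for all $x\in X$, $r>0$. *)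

theory Defs
  imports "HOL-Analysis.Analysis"
begin

definition quasi_metric :: "'a set \<Rightarrow> ('a \<Rightarrow> 'a \<Rightarrow> real) \<Rightarrow> real \<Rightarrow> bool" where
  "quasi_metric X rho A0 \<longleftrightarrow> A0 \<ge> 1 \<and>
     (\<forall>x\<in>X. \<forall>y\<in>X. rho x y \<ge> 0 \<and> (rho x y = 0 \<longleftrightarrow> x = y) \<and> rho x y = rho y x) \<and>
     (\<forall>x\<in>X. \<forall>y\<in>X. \<forall>z\<in>X. rho x y \<le> A0 * (rho x z + rho z y))"

definition qball :: "'a set \<Rightarrow> ('a \<Rightarrow> 'a \<Rightarrow> real) \<Rightarrow> 'a \<Rightarrow> real \<Rightarrow> 'a set" where
  "qball X rho x r = {y\<in>X. rho x y < r}"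

definition homogeneous_type :: "'a set \<Rightarrow> ('a \<Rightarrow> 'a \<Rightarrow> real) \<Rightarrow> 'a measure \<Rightarrow> bool" where
  "homogeneous_type X rho M \<longleftrightarrow>
     (\<exists>A0. quasi_metric X rho A0) \<and> space M = X \<and>
     (\<forall>x\<in>X. \<forall>r. qball X rho x r \<in> sets M) \<and>
     (\<exists>C\<ge>1. \<forall>x\<in>X. \<forall>r>0.
        0 < emeasure M (qball X rho x (2*r)) \<and>
        emeasure M (qball X rho x (2*r)) \<le> ennreal C * emeasure M (qball X rho x r) \<and>
        emeasure M (qball X rho x r) < \<infinity>)"

end

theory Submission
  imports Defs
begin

(*
  Write S for the set of measures of balls of positive radius.
  Two exact formulas for its extremal values are proved first:
    Sup S = mu(X)                 (X is the increasing union of balls around a point),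
    Inf S = inf_{x in X} mu({x})  (each singleton is the decreasing intersection of
                                   balls around it, all of finite measure).
  A counting lemma shows that a set of finite measure whose points all carry
  mass at least d > 0 is finite; when the point masses are uniformly bounded below,
  applied to balls it makes X countable, and applied to X itself it makes X finite
  if mu(X) < oo.  With these facts the three
  alternatives read: (1) mu(X) < oo, (2) X countable and inf mu({x}) > 0,
  (3) inf mu({x}) = 0 and mu(X) = oo.  Their mutual exclusion uses that X is
  infinite, and one of them holds because if (1) and (3) fail the infimum of the
  point masses is a positive real number, which gives (2).
*)

text \<open>A set of finite measure in which every point has mass at least \<open>d > 0\<close>
  contains at most \<open>\<mu>(A)/d\<close> points; in particular it is finite.\<close>
lemma finite_if_uniform_point_mass:
  assumes A: "A \<in> sets M" and fin: "emeasure M A < \<infinity>" and d: "d > 0"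
    and sing: "\<And>y. y \<in> A \<Longrightarrow> {y} \<in> sets M \<and> emeasure M {y} \<ge> ennreal d"
  shows "finite A"
proof (rule ccontr)
  assume inf: "infinite A"
  obtain c where c: "emeasure M A = ennreal c" "c \<ge> 0"
    using fin by (cases "emeasure M A") auto
  define k where "k = nat (ceiling (c / d)) + 1"
  have kgt: "real k * d > c"
  proof -
    have "c / d < real k" unfolding k_def by linarith
    thus ?thesis using d by (simp add: field_simps)
  qed
  obtain F where F: "finite F" "card F = k" "F \<subseteq> A"
    using infinite_arbitrarily_large[OF inf] by blast
  have Fs: "\<And>x. x \<in> F \<Longrightarrow> {x} \<in> sets M" using F sing by blast
  have "ennreal (real k * d) = (\<Sum>x\<in>F. ennreal d)"
    using F d by (simp add: ennreal_mult' ennreal_of_nat_eq_real_of_nat)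
  also have "\<dots> \<le> (\<Sum>x\<in>F. emeasure M {x})"
    by (rule sum_mono) (use F sing in blast)
  also have "\<dots> = emeasure M F" using emeasure_eq_sum_singleton[OF F(1) Fs] by simp
  also have "\<dots> \<le> emeasure M A" using F(3) A by (rule emeasure_mono)
  also have "\<dots> = ennreal c" by (rule c)
  finally have "real k * d \<le> c" using c by (simp add: ennreal_le_iff)
  thus False using kgt by linarith
qed

lemma homogeneous_typeD:
  assumes "homogeneous_type X rho M"
  shows "\<exists>A0. quasi_metric X rho A0" and "space M = X"
    and "\<And>x r. x \<in> X \<Longrightarrow> qball X rho x r \<in> sets M"
    and "\<And>x r. x \<in> X \<Longrightarrow> r > 0 \<Longrightarrow> emeasure M (qball X rho x r) < \<infinity>"
  using assms unfolding homogeneous_type_def by blast+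

lemma qball_centre:
  assumes "quasi_metric X rho A0" and "x \<in> X" and "r > 0"
  shows "x \<in> qball X rho x r"
proof -
  have "rho x x = 0" using assms(1,2) unfolding quasi_metric_def by blast
  thus ?thesis using assms(2,3) unfolding qball_def by simp
qed

lemma singleton_eq_INT_qball:
  assumes qm: "quasi_metric X rho A0" and x: "x \<in> X"
  shows "{x} = (\<Inter>n. qball X rho x (1 / Suc n))"
proof
  show "{x} \<subseteq> (\<Inter>n. qball X rho x (1 / Suc n))"
    using qball_centre[OF qm x] by auto
  show "(\<Inter>n. qball X rho x (1 / Suc n)) \<subseteq> {x}"
  proof
    fix y assume "y \<in> (\<Inter>n. qball X rho x (1 / Suc n))"
    hence y: "y \<in> X" and small: "\<And>n. rho x y < 1 / Suc n" unfolding qball_def by auto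
    have "\<not> rho x y > 0"
    proof
      assume "rho x y > 0"
      then obtain n where "1 / Suc n < rho x y"
        using nat_approx_posE by (metis of_nat_Suc)
      thus False using small[of n] by simp
    qed
    moreover have "rho x y \<ge> 0 \<and> (rho x y = 0 \<longleftrightarrow> x = y)"
      using qm x y unfolding quasi_metric_def by blast
    ultimately show "y \<in> {x}" by auto
  qed
qed

lemma emeasure_singleton_eq_INF_qball:
  assumes hom: "homogeneous_type X rho M" and x: "x \<in> X"
  shows "{x} \<in> sets M"
    and "emeasure M {x} = (INF n. emeasure M (qball X rho x (1 / Suc n)))"
proof -
  obtain A0 where qm: "quasi_metric X rho A0" using homogeneous_typeD(1)[OF hom] by blast
  have balls: "\<And>n. qball X rho x (1 / Suc n) \<in> sets M"
    using homogeneous_typeD(3)[OF hom x] by blast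
  show "{x} \<in> sets M"
    unfolding singleton_eq_INT_qball[OF qm x] using balls by (intro sets.countable_INT) auto
  have "(INF n. emeasure M (qball X rho x (1 / Suc n)))
        = emeasure M (\<Inter>n. qball X rho x (1 / Suc n))"
  proof (rule INF_emeasure_decseq')
    show "decseq (\<lambda>n. qball X rho x (1 / real (Suc n)))"
      unfolding decseq_def qball_def by (auto intro: less_le_trans[OF _ frac_le[of 1]])
    show "\<exists>n. emeasure M (qball X rho x (1 / real (Suc n))) \<noteq> \<infinity>"
      using homogeneous_typeD(4)[OF hom x, of 1] by (intro exI[of _ 0]) auto
  qed (use balls in auto)
  thus "emeasure M {x} = (INF n. emeasure M (qball X rho x (1 / Suc n)))"
    using singleton_eq_INT_qball[OF qm x] by simp
qed

lemma UN_qball_eq_space: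
  assumes "x0 \<in> X"
  shows "(\<Union>n. qball X rho x0 (Suc n)) = X"
proof
  show "(\<Union>n. qball X rho x0 (Suc n)) \<subseteq> X" unfolding qball_def by auto
  show "X \<subseteq> (\<Union>n. qball X rho x0 (Suc n))"
  proof
    fix y assume y: "y \<in> X"
    obtain n where "rho x0 y < real n" using reals_Archimedean2 by blast
    hence "y \<in> qball X rho x0 (Suc n)" using y unfolding qball_def by simp
    thus "y \<in> (\<Union>n. qball X rho x0 (Suc n))" by blast
  qed
qed

definition ball_measures :: "'a set \<Rightarrow> ('a \<Rightarrow> 'a \<Rightarrow> real) \<Rightarrow> 'a measure \<Rightarrow> ennreal set" where
  "ball_measures X rho M = {emeasure M (qball X rho x r) | x r. x \<in> X \<and> r > 0}"

lemma ball_measuresI: "x \<in> X \<Longrightarrow> r > 0 \<Longrightarrow> emeasure M (qball X rho x r) \<in> ball_measures X rho M"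
  unfolding ball_measures_def by blast

lemma Sup_ball_measures:
  assumes hom: "homogeneous_type X rho M" and x0: "x0 \<in> X"
  shows "Sup (ball_measures X rho M) = emeasure M X"
proof (rule antisym)
  have "X \<in> sets M" using homogeneous_typeD(2)[OF hom] sets.top by metis
  thus "Sup (ball_measures X rho M) \<le> emeasure M X"
    unfolding ball_measures_def by (auto intro!: Sup_least emeasure_mono simp: qball_def)
  have inc: "incseq (\<lambda>n. qball X rho x0 (Suc n))" unfolding incseq_def qball_def by auto
  have "emeasure M X = emeasure M (\<Union>n. qball X rho x0 (Suc n))"
    by (simp only: UN_qball_eq_space[OF x0])
  also have "\<dots> = (SUP n. emeasure M (qball X rho x0 (Suc n)))"
    by (rule SUP_emeasure_incseq[symmetric]) (use homogeneous_typeD(3)[OF hom x0] inc in auto)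
  also have "\<dots> \<le> Sup (ball_measures X rho M)"
    by (intro SUP_least Sup_upper ball_measuresI x0) simp
  finally show "emeasure M X \<le> Sup (ball_measures X rho M)" .
qed

lemma Inf_ball_measures:
  assumes hom: "homogeneous_type X rho M"
  shows "Inf (ball_measures X rho M) = (INF x\<in>X. emeasure M {x})"
proof (rule antisym)
  show "Inf (ball_measures X rho M) \<le> (INF x\<in>X. emeasure M {x})"
  proof (rule INF_greatest)
    fix x assume x: "x \<in> X"
    show "Inf (ball_measures X rho M) \<le> emeasure M {x}"
      unfolding emeasure_singleton_eq_INF_qball(2)[OF hom x]
      by (intro INF_greatest Inf_lower ball_measuresI x) simp
  qed
  obtain A0 where qm: "quasi_metric X rho A0" using homogeneous_typeD(1)[OF hom] by blast
  show "(INF x\<in>X. emeasure M {x}) \<le> Inf (ball_measures X rho M)"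
    unfolding ball_measures_def
  proof (rule Inf_greatest, clarify)
    fix x r assume x: "x \<in> X" and r: "(r::real) > 0"
    have "emeasure M {x} \<le> emeasure M (qball X rho x r)"
      using qball_centre[OF qm x r] homogeneous_typeD(3)[OF hom x] by (intro emeasure_mono) auto
    thus "(INF x\<in>X. emeasure M {x}) \<le> emeasure M (qball X rho x r)"
      using x by (meson INF_lower order.trans)
  qed
qed

text \<open>If all point masses are at least \<open>d > 0\<close>, every ball is finite, so the
  space, a countable union of balls, is countable.\<close>
lemma countable_if_uniform_point_mass:
  assumes hom: "homogeneous_type X rho M" and d: "d > 0"
    and mass: "\<And>x. x \<in> X \<Longrightarrow> emeasure M {x} \<ge> ennreal d"
  shows "countable X"
proof (cases "X = {}")
  case False
  then obtain x0 where x0: "x0 \<in> X" by blast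
  have finite_balls: "finite (qball X rho x0 (Suc n))" for n
  proof (rule finite_if_uniform_point_mass[OF _ _ d])
    show "qball X rho x0 (Suc n) \<in> sets M" using homogeneous_typeD(3)[OF hom x0] .
    show "emeasure M (qball X rho x0 (Suc n)) < \<infinity>" using homogeneous_typeD(4)[OF hom x0] by simp
    show "\<And>y. y \<in> qball X rho x0 (Suc n) \<Longrightarrow> {y} \<in> sets M \<and> ennreal d \<le> emeasure M {y}"
      using emeasure_singleton_eq_INF_qball(1)[OF hom] mass unfolding qball_def by blast
  qed
  have "countable (\<Union>n. qball X rho x0 (Suc n))"
    by (rule countable_UN[OF countableI_type countable_finite[OF finite_balls]])
  thus "countable X" by (simp only: UN_qball_eq_space[OF x0])
qed simp

lemma finite_if_uniform_point_mass_finite_measure: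
  assumes hom: "homogeneous_type X rho M" and d: "d > 0" and fin: "emeasure M X < \<infinity>"
    and mass: "\<And>x. x \<in> X \<Longrightarrow> emeasure M {x} \<ge> ennreal d"
  shows "finite X"
proof (rule finite_if_uniform_point_mass[OF _ fin d])
  show "X \<in> sets M" using homogeneous_typeD(2)[OF hom] sets.top by metis
  show "\<And>y. y \<in> X \<Longrightarrow> {y} \<in> sets M \<and> ennreal d \<le> emeasure M {y}"
    using emeasure_singleton_eq_INF_qball(1)[OF hom] mass by blast
qed

text \<open>Point masses are finite, being dominated by the measure of a ball.\<close>
lemma emeasure_singleton_finite:
  assumes hom: "homogeneous_type X rho M" and x: "x \<in> X"
  shows "emeasure M {x} < \<infinity>"
proof -
  obtain A0 where "quasi_metric X rho A0" using homogeneous_typeD(1)[OF hom] by blast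
  hence "{x} \<subseteq> qball X rho x 1" using qball_centre[OF _ x] by simp
  hence "emeasure M {x} \<le> emeasure M (qball X rho x 1)"
    using homogeneous_typeD(3)[OF hom x] by (rule emeasure_mono)
  thus ?thesis using homogeneous_typeD(4)[OF hom x, of 1] by simp
qed

theorem lemma2p4:
  fixes X :: "'a set" and rho :: "'a \<Rightarrow> 'a \<Rightarrow> real" and M :: "'a measure"
  assumes "homogeneous_type X rho M"
    and "infinite X"
  defines "P1 \<equiv> emeasure M X < \<infinity>"
    and "P2 \<equiv> countable X \<and> (\<exists>\<delta>>0. \<forall>x\<in>X. emeasure M {x} \<ge> ennreal \<delta>)"
    and "P3 \<equiv> Inf {emeasure M (qball X rho x r) | x r. x \<in> X \<and> r > 0} = 0 \<and>
              Sup {emeasure M (qball X rho x r) | x r. x \<in> X \<and> r > 0} = \<infinity>"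
  shows "(P1 \<or> P2 \<or> P3) \<and> \<not> (P1 \<and> P2) \<and> \<not> (P1 \<and> P3) \<and> \<not> (P2 \<and> P3)"
proof -
  note hom = assms(1)
  define m where "m = (INF x\<in>X. emeasure M {x})"
  obtain x0 where x0: "x0 \<in> X" using assms(2) by (metis finite.emptyI ex_in_conv)
  have P3_iff: "P3 \<longleftrightarrow> m = 0 \<and> emeasure M X = \<infinity>"
    unfolding P3_def m_def Inf_ball_measures[OF hom, symmetric]
      Sup_ball_measures[OF hom x0, symmetric] ball_measures_def ..
  have m_le: "\<And>x. x \<in> X \<Longrightarrow> m \<le> emeasure M {x}" unfolding m_def by (rule INF_lower)
  have m_ge: "\<And>\<delta>. \<forall>x\<in>X. emeasure M {x} \<ge> \<delta> \<Longrightarrow> \<delta> \<le> m" unfolding m_def by (rule INF_greatest) blast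
  have m_finite: "m < \<infinity>" using m_le[OF x0] emeasure_singleton_finite[OF hom x0] by simp
  have not12: "\<not> (P1 \<and> P2)"
    using finite_if_uniform_point_mass_finite_measure[OF hom] assms(2) unfolding P1_def P2_def by blast
  have not23: "\<not> (P2 \<and> P3)"
  proof
    assume "P2 \<and> P3"
    then obtain \<delta> where "\<delta> > 0" "\<forall>x\<in>X. emeasure M {x} \<ge> ennreal \<delta>" "m = 0"
      unfolding P2_def P3_iff by blast
    thus False using m_ge[of "ennreal \<delta>"] by simp
  qed
  have "P2" if "\<not> P1" "\<not> P3"
  proof -
    have m_pos: "enn2real m > 0"
      using that m_finite unfolding P1_def P3_iff by (simp add: enn2real_positive_iff less_top zero_less_iff_neq_zero)
    have mass: "\<And>x. x \<in> X \<Longrightarrow> emeasure M {x} \<ge> ennreal (enn2real m)"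
      using m_le m_finite by simp
    show P2 unfolding P2_def
      using countable_if_uniform_point_mass[OF hom m_pos mass] m_pos mass by blast
  qed
  moreover have not13: "\<not> (P1 \<and> P3)" unfolding P1_def P3_iff by (simp add: less_top)
  ultimately show ?thesis using not12 not23 by blast
qed

end
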